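(* Fix $\alpha>0$ and $n\in\mathbb{N}$. For each $p\in\mathbb{N}$ consider the multivariate probit Indian buffet process (MVP-IBP) model with $p$ features, and let $n_i=\sum_{j=1}^p y_{ij}$ denote the number of features of object $i$. Then $\lim_{p\to\infty}E(n_i)=\alpha$ for each $i=1,\dots,n$. If moreover $\bm{\Sigma}=\bm{I}_p$ for every $p$, then $n_i$ converges in distribution to a Poisson$(\alpha)$ random variable as $p\to\infty$, for each $i=1,\dots,n$.
   Context: MVP-IBP model with $p$ features: for $i=1,\dots,n$ and $j=1,\dots,p$, $y_{ij}=\mathds{1}(z_{ij}>0)$, $z_{ij}=\beta_j+\varepsilon_{ij}$, where $\beta_1,\dots,\beta_p$ are i.i.d. $N(\mu_p,\tau_p^2)$, the vectors $\bm{\varepsilon}_i=(\varepsilon_{i1},\dots,\varepsilon_{ip})^\top$ are i.i.d. $N_p(\bm{0},\bm{\Sigma})$ across $i$ and independent of $\bm\beta$, with $\bm{\Sigma}=\bm\Sigma_p$ a $p\times p$ positive definite correlation matrix (unit diagonal), and the hyperparameters are $\tau_p=\sqrt{2\log p}$ and $\mu_p=\sqrt{1+\tau_p^2}\,\Phi^{-1}\!\left(\frac{\alpha}{\alpha+p}\right)$, where $\Phi$ is the standard normal CDF. *)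

theory Defs
  imports "HOL-Probability.Probability"
begin

definition normal_measure :: "real \<Rightarrow> real \<Rightarrow> real measure" where
  "normal_measure m v =
     (if v > 0 then density lborel (normal_density m (sqrt v)) else return borel m)"

definition Phi :: "real \<Rightarrow> real" where
  "Phi x = measure (normal_measure 0 1) {..x}"

definition Phi_inv :: "real \<Rightarrow> real" where
  "Phi_inv q = (THE x. Phi x = q)"

definition tau_p :: "nat \<Rightarrow> real" where
  "tau_p p = sqrt (2 * ln (real p))"

definition mu_p :: "real \<Rightarrow> nat \<Rightarrow> real" where
  "mu_p \<alpha> p = sqrt (1 + (tau_p p)\<^sup>2) * Phi_inv (\<alpha> / (\<alpha> + real p))"

definition corr_matrix :: "nat \<Rightarrow> (nat \<Rightarrow> nat \<Rightarrow> real) \<Rightarrow> bool" where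
  "corr_matrix p S \<longleftrightarrow>
     (\<forall>j<p. \<forall>k<p. S j k = S k j) \<and> (\<forall>j<p. S j j = 1) \<and>
     (\<forall>c::nat \<Rightarrow> real. (\<exists>j<p. c j \<noteq> 0) \<longrightarrow> (\<Sum>j<p. \<Sum>k<p. c j * S j k * c k) > 0)"

text \<open>The random vector (X 0, ..., X (p-1)) on M has law N_p(0, S):
  every linear combination is univariate normal with mean 0 and variance c^T S c.\<close>
definition mvn0 :: "'a measure \<Rightarrow> nat \<Rightarrow> (nat \<Rightarrow> nat \<Rightarrow> real) \<Rightarrow> (nat \<Rightarrow> 'a \<Rightarrow> real) \<Rightarrow> bool" where
  "mvn0 M p S X \<longleftrightarrow>
     (\<forall>j<p. X j \<in> borel_measurable M) \<and>
     (\<forall>c::nat \<Rightarrow> real. distr M borel (\<lambda>\<omega>. \<Sum>j<p. c j * X j \<omega>)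
                        = normal_measure 0 (\<Sum>j<p. \<Sum>k<p. c j * S j k * c k))"

definition mvp_ibp ::
  "'a measure \<Rightarrow> nat \<Rightarrow> real \<Rightarrow> nat \<Rightarrow> (nat \<Rightarrow> nat \<Rightarrow> real)
     \<Rightarrow> (nat \<Rightarrow> 'a \<Rightarrow> real) \<Rightarrow> (nat \<Rightarrow> nat \<Rightarrow> 'a \<Rightarrow> real) \<Rightarrow> bool" where
  "mvp_ibp M p \<alpha> n S \<beta> \<epsilon> \<longleftrightarrow>
     prob_space M \<and> corr_matrix p S \<and>
     (\<forall>j<p. \<beta> j \<in> borel_measurable M \<and>
            distr M borel (\<beta> j) = normal_measure (mu_p \<alpha> p) ((tau_p p)\<^sup>2)) \<and>
     prob_space.indep_vars M (\<lambda>_. borel) \<beta> {..<p} \<and>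
     (\<forall>i<n. mvn0 M p S (\<epsilon> i)) \<and>
     prob_space.indep_vars M (\<lambda>_. Pi\<^sub>M {..<p} (\<lambda>_. borel :: real measure))
       (\<lambda>k \<omega>. case k of None \<Rightarrow> (\<lambda>j\<in>{..<p}. \<beta> j \<omega>)
                     | Some i \<Rightarrow> (\<lambda>j\<in>{..<p}. \<epsilon> i j \<omega>))
       (insert None (Some ` {..<n}))"

text \<open>n_i = sum_j y_ij with y_ij = 1(z_ij > 0), z_ij = beta_j + eps_ij.\<close>
definition num_features :: "nat \<Rightarrow> (nat \<Rightarrow> 'a \<Rightarrow> real) \<Rightarrow> (nat \<Rightarrow> nat \<Rightarrow> 'a \<Rightarrow> real) \<Rightarrow> nat \<Rightarrow> 'a \<Rightarrow> real" where
  "num_features p \<beta> \<epsilon> i \<omega> = (\<Sum>j<p. if \<beta> j \<omega> + \<epsilon> i j \<omega> > 0 then 1 else 0)"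

end

theory Submission
  imports Defs "HOL-Real_Asymp.Real_Asymp"
begin

(* Each latent variable z_ij = beta_j + eps_ij is N(mu_p, 1 + tau_p^2), and mu_p is chosen so that
   P(z_ij > 0) = alpha / (alpha + p); linearity of expectation gives E n_i = p alpha / (alpha + p),
   which tends to alpha.  For Sigma = I the joint characteristic function of (z_i1, ..., z_ip)
   factorises.  By Kac's theorem, reduced here to Levy's uniqueness theorem by tilting and
   conditioning one coordinate at a time, the z_ij are then independent, so n_i is
   Binomial(p, alpha / (alpha + p)), and these laws converge pointwise to Poisson(alpha). *)

section \<open>Normal distributions\<close>

lemma normal_measure_eq_distr_std_normal:
  assumes "v > 0"
  shows "normal_measure m v = distr std_normal_distribution borel (\<lambda>x. m + sqrt v * x)"
proof -
  interpret std: prob_space std_normal_distribution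
    using real_dist_normal_dist real_distribution_def by blast
  have "distributed std_normal_distribution lborel (\<lambda>x. x) (normal_density 0 1)"
    unfolding distributed_def by (auto simp: distr_id2 normal_density_nonneg)
  from std.normal_density_affine[OF this, of "sqrt v" m] assms
  have "distributed std_normal_distribution lborel (\<lambda>x. m + sqrt v * x) (normal_density m (sqrt v))"
    by simp
  then have "distr std_normal_distribution lborel (\<lambda>x. m + sqrt v * x)
      = density lborel (normal_density m (sqrt v))"
    unfolding distributed_def by simp
  moreover have "distr std_normal_distribution lborel (\<lambda>x. m + sqrt v * x)
      = distr std_normal_distribution borel (\<lambda>x. m + sqrt v * x)"
    by (rule distr_cong) auto
  ultimately show ?thesis
    using assms unfolding normal_measure_def by simp
qed

lemma real_distribution_normal_measure:
  assumes "v \<ge> 0"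
  shows "real_distribution (normal_measure m v)"
proof (cases "v = 0")
  case True
  then show ?thesis
    by (simp add: normal_measure_def real_distribution_def real_distribution_axioms_def
        prob_space_return)
next
  case False
  interpret std: real_distribution std_normal_distribution by (rule real_dist_normal_dist)
  from False assms show ?thesis
    by (auto simp: normal_measure_eq_distr_std_normal intro!: std.real_distribution_distr)
qed

lemma char_normal_measure:
  assumes "v \<ge> 0"
  shows "char (normal_measure m v) t = iexp (m * t) * complex_of_real (exp (- (v * t\<^sup>2) / 2))"
proof (cases "v = 0")
  case True
  then show ?thesis
    unfolding normal_measure_def char_def
    by (simp, subst integral_return) (auto simp: mult.commute)
next
  case False
  with assms have v: "v > 0" by simp
  have "char (normal_measure m v) t
      = (CLINT x|std_normal_distribution. iexp (t * (m + sqrt v * x)))"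
    unfolding normal_measure_eq_distr_std_normal[OF v] char_def
    by (subst integral_distr) auto
  also have "\<dots> = (CLINT x|std_normal_distribution. iexp (m * t) * iexp ((t * sqrt v) * x))"
    by (intro Bochner_Integration.integral_cong refl)
      (simp add: algebra_simps exp_add[symmetric])
  also have "\<dots> = iexp (m * t) * char std_normal_distribution (t * sqrt v)"
    unfolding char_def by simp
  also have "\<dots> = iexp (m * t) * complex_of_real (exp (- (v * t\<^sup>2) / 2))"
    using v by (simp add: char_std_normal_distribution power_mult_distrib)
  finally show ?thesis .
qed

lemma char_normal_measure_add_1:
  assumes "v \<ge> 0"
  shows "char (normal_measure m (v + 1)) t
       = char (normal_measure m v) t * complex_of_real (exp (- t\<^sup>2 / 2))"
  using assms
  by (simp add: char_normal_measure add_nonneg_pos algebra_simps exp_add[symmetric]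
      diff_divide_distrib add_divide_distrib flip: exp_of_real)

lemma distr_std_normal_uminus: "distr std_normal_distribution borel uminus = std_normal_distribution"
proof (rule Levy_uniqueness)
  interpret std: real_distribution std_normal_distribution by (rule real_dist_normal_dist)
  show "real_distribution (distr std_normal_distribution borel uminus)"
    by (intro std.real_distribution_distr) simp
  show "real_distribution std_normal_distribution" by (rule real_dist_normal_dist)
  show "char (distr std_normal_distribution borel uminus) = char std_normal_distribution"
  proof
    fix t
    have "char (distr std_normal_distribution borel uminus) t
        = (CLINT x|std_normal_distribution. iexp ((- t) * x))"
      unfolding char_def by (subst integral_distr) auto
    also have "\<dots> = char std_normal_distribution (- t)"
      unfolding char_def ..
    finally show "char (distr std_normal_distribution borel uminus) t = char std_normal_distribution t"
      by (simp add: char_std_normal_distribution)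
  qed
qed

lemma measure_std_normal_singleton: "measure std_normal_distribution {x} = 0"
proof -
  have null: "S \<in> null_sets std_normal_distribution" if "S \<in> null_sets lborel" for S
    using that by (subst null_sets_density_iff) (auto elim!: AE_mp[OF AE_not_in])
  have "{x} \<in> null_sets lborel"
    by (auto simp: null_sets_def)
  with null[OF this] show ?thesis
    by (simp add: measure_def null_setsD1)
qed

lemma measure_std_normal_Ioc_pos:
  assumes "a < b"
  shows "measure std_normal_distribution {a<..b} > 0"
proof -
  interpret std: real_distribution std_normal_distribution by (rule real_dist_normal_dist)
  have "{a<..b} \<notin> null_sets std_normal_distribution"
  proof
    assume "{a<..b} \<in> null_sets std_normal_distribution"
    then have "AE x in lborel. x \<in> {a<..b} \<longrightarrow> std_normal_density x = 0"
      by (subst (asm) null_sets_density_iff) auto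
    then have "AE x in lborel. x \<notin> {a<..b}"
      by (rule AE_mp) (auto intro!: AE_I2 simp: normal_density_def)
    then have "emeasure lborel {a<..b} = 0"
      by (subst (asm) AE_iff_measurable[of "{a<..b}"]) auto
    with assms show False by simp
  qed
  then show ?thesis
    using measure_nonneg[of std_normal_distribution "{a<..b}"]
    by (auto simp: null_sets_def std.emeasure_eq_measure less_le)
qed

lemma Phi_eq_cdf: "Phi = cdf std_normal_distribution"
  unfolding Phi_def cdf_def normal_measure_def by (rule ext) simp

lemma isCont_Phi: "isCont Phi x"
proof -
  interpret real_distribution std_normal_distribution by (rule real_dist_normal_dist)
  show ?thesis
    unfolding Phi_eq_cdf isCont_cdf by (rule measure_std_normal_singleton)
qed

lemma Phi_strict_mono: "a < b \<Longrightarrow> Phi a < Phi b"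
proof -
  assume "a < b"
  interpret real_distribution std_normal_distribution by (rule real_dist_normal_dist)
  have "Phi b - Phi a = measure std_normal_distribution {a<..b}"
    unfolding Phi_eq_cdf using cdf_diff_eq[OF \<open>a < b\<close>] by simp
  with measure_std_normal_Ioc_pos[OF \<open>a < b\<close>] show ?thesis by simp
qed

lemma Phi_Phi_inv:
  assumes "0 < q" "q < 1"
  shows "Phi (Phi_inv q) = q"
proof -
  interpret real_distribution std_normal_distribution by (rule real_dist_normal_dist)
  have at_bot: "(Phi \<longlongrightarrow> 0) at_bot" and at_top: "(Phi \<longlongrightarrow> 1) at_top"
    unfolding Phi_eq_cdf by (rule cdf_lim_at_bot, rule cdf_lim_at_top_prob)
  from order_tendstoD(2)[OF at_bot \<open>0 < q\<close>] obtain x1 where x1: "\<And>x. x \<le> x1 \<Longrightarrow> Phi x < q"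
    by (auto simp: eventually_at_bot_linorder)
  from order_tendstoD(1)[OF at_top \<open>q < 1\<close>] obtain x2 where x2: "\<And>x. x \<ge> x2 \<Longrightarrow> Phi x > q"
    by (auto simp: eventually_at_top_linorder)
  have "\<exists>x. min x1 x2 \<le> x \<and> x \<le> max x1 x2 \<and> Phi x = q"
    by (rule IVT) (use x1[of "min x1 x2"] x2[of "max x1 x2"] isCont_Phi in auto)
  then obtain x where x: "Phi x = q" by blast
  have "Phi_inv q = x"
    unfolding Phi_inv_def
  proof (rule the_equality)
    fix y
    assume "Phi y = q"
    with x show "y = x"
      using Phi_strict_mono[of x y] Phi_strict_mono[of y x] by (cases x y rule: linorder_cases) auto
  qed (fact x)
  with x show ?thesis by simp
qed

lemma measure_normal_measure_greaterThan_0: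
  assumes "v > 0"
  shows "measure (normal_measure m v) {0<..} = Phi (m / sqrt v)"
proof -
  interpret std: real_distribution std_normal_distribution by (rule real_dist_normal_dist)
  let ?a = "m / sqrt v"
  have "measure (normal_measure m v) {0<..}
      = measure std_normal_distribution ((\<lambda>x. m + sqrt v * x) -` {0<..})"
    unfolding normal_measure_eq_distr_std_normal[OF assms] by (subst measure_distr) auto
  also have "(\<lambda>x. m + sqrt v * x) -` {0<..} = uminus -` {..<?a}"
    using assms by (auto simp: field_simps)
  also have "measure std_normal_distribution (uminus -` {..<?a})
      = measure (distr std_normal_distribution borel uminus) {..<?a}"
    by (subst measure_distr) auto
  also have "\<dots> = measure std_normal_distribution ({..?a} - {?a})"
    unfolding distr_std_normal_uminus by (rule arg_cong[where f="measure _"]) auto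
  also have "\<dots> = measure std_normal_distribution {..?a} - measure std_normal_distribution {?a}"
    by (rule std.finite_measure_Diff) auto
  also have "\<dots> = Phi ?a"
    unfolding measure_std_normal_singleton Phi_eq_cdf cdf_def by simp
  finally show ?thesis .
qed

section \<open>Independence from a factorised characteristic function\<close>

lemma prob_space_density_real:
  fixes h :: "'a \<Rightarrow> real"
  assumes "h \<in> borel_measurable P" "\<And>x. h x \<ge> 0" "integrable P h" "integral\<^sup>L P h = 1"
  shows "prob_space (density P (\<lambda>x. ennreal (h x)))"
proof (rule prob_spaceI)
  have "emeasure (density P (\<lambda>x. ennreal (h x))) (space (density P (\<lambda>x. ennreal (h x))))
      = (\<integral>\<^sup>+x. ennreal (h x) \<partial>P)"
    using assms by (subst emeasure_density) (auto intro!: nn_integral_cong)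
  also have "\<dots> = ennreal (integral\<^sup>L P h)"
    using assms by (intro nn_integral_eq_integral) auto
  finally show "emeasure (density P (\<lambda>x. ennreal (h x))) (space (density P (\<lambda>x. ennreal (h x)))) = 1"
    using assms by simp
qed

lemma integral_uniform_measure:
  fixes f :: "'a \<Rightarrow> 'b::{banach, second_countable_topology}"
  assumes "finite_measure M" and E_sets[measurable]: "E \<in> sets M"
    and f_meas[measurable]: "f \<in> borel_measurable M" and E: "measure M E > 0"
  shows "integral\<^sup>L (uniform_measure M E) f = (1 / measure M E) *\<^sub>R (\<integral>x. indicator E x *\<^sub>R f x \<partial>M)"
proof -
  interpret finite_measure M by fact
  have "(\<lambda>x. indicator E x / emeasure M E) = (\<lambda>x. ennreal (indicator E x / measure M E))"
    using divide_ennreal[of 1 "measure M E"] E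
    by (auto simp: fun_eq_iff emeasure_eq_measure indicator_def)
  then have density_eq: "uniform_measure M E = density M (\<lambda>x. ennreal (indicator E x / measure M E))"
    by (simp add: uniform_measure_def)
  have [measurable]: "(\<lambda>x. indicator E x / measure M E) \<in> borel_measurable M"
    by measurable
  have "integral\<^sup>L (uniform_measure M E) f = (\<integral>x. (indicator E x / measure M E) *\<^sub>R f x \<partial>M)"
    unfolding density_eq by (rule integral_density) (use E in \<open>auto intro!: AE_I2\<close>)
  also have "\<dots> = (\<integral>x. (1 / measure M E) *\<^sub>R (indicator E x *\<^sub>R f x) \<partial>M)"
    by (intro Bochner_Integration.integral_cong refl) simp
  also have "\<dots> = (1 / measure M E) *\<^sub>R (\<integral>x. indicator E x *\<^sub>R f x \<partial>M)"
    by (rule integral_scaleR_right)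
  finally show ?thesis .
qed

lemma distr_density_eq_of_char:
  fixes X h :: "'a \<Rightarrow> real"
  assumes P: "prob_space P"
    and [measurable]: "X \<in> borel_measurable P" "h \<in> borel_measurable P"
    and h_nonneg: "\<And>x. h x \<ge> 0" and "integrable P h" "integral\<^sup>L P h = 1"
    and "real_distribution \<mu>"
    and char_h: "\<And>s. (CLINT x|P. h x *\<^sub>R iexp (s * X x)) = char \<mu> s"
  shows "distr (density P (\<lambda>x. ennreal (h x))) borel X = \<mu>"
proof (rule Levy_uniqueness)
  let ?Q = "density P (\<lambda>x. ennreal (h x))"
  interpret Q: prob_space ?Q
    by (rule prob_space_density_real) (use assms in auto)
  show "real_distribution (distr ?Q borel X)"
    by (intro Q.real_distribution_distr) simp
  show "real_distribution \<mu>" by fact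
  show "char (distr ?Q borel X) = char \<mu>"
  proof
    fix s
    have "char (distr ?Q borel X) s = (CLINT x|?Q. iexp (s * X x))"
      unfolding char_def by (subst integral_distr) auto
    also have "\<dots> = (CLINT x|P. h x *\<^sub>R iexp (s * X x))"
      by (rule integral_density) (use h_nonneg in auto)
    finally show "char (distr ?Q borel X) s = char \<mu> s"
      using char_h by simp
  qed
qed

lemma distr_tilted_eq_of_char:
  fixes X w :: "'a \<Rightarrow> real"
  assumes P: "prob_space P"
    and [measurable]: "X \<in> borel_measurable P" "w \<in> borel_measurable P"
    and w_bounded: "\<And>x. \<bar>w x\<bar> \<le> 1"
    and law: "distr P borel X = \<mu>"
    and char_w: "\<And>s. (CLINT x|P. w x * iexp (s * X x)) = char \<mu> s * (LINT x|P. w x)"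
  shows "distr (density P (\<lambda>x. ennreal ((2 + w x) / (2 + (LINT x|P. w x))))) borel X = \<mu>"
proof -
  interpret P: prob_space P by fact
  have int_w: "integrable P w"
    by (rule P.integrable_const_bound[where B=1]) (use w_bounded in auto)
  define K where "K = 2 + (LINT x|P. w x)"
  have "-1 \<le> (LINT x|P. w x)"
    using int_w w_bounded by (intro P.integral_ge_const AE_I2) (auto simp: abs_le_iff)
  then have K: "K \<ge> 1"
    unfolding K_def by linarith
  have char_X: "(CLINT x|P. iexp (s * X x)) = char \<mu> s" for s
    unfolding law[symmetric] char_def by (subst integral_distr) auto
  show ?thesis
    unfolding K_def[symmetric]
  proof (rule distr_density_eq_of_char[OF P])
    show "(\<lambda>x. (2 + w x) / K) \<in> borel_measurable P"
      by measurable
    show "(2 + w x) / K \<ge> 0" for x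
      using w_bounded[of x] K by (auto simp: abs_le_iff intro!: divide_nonneg_pos)
    show "integrable P (\<lambda>x. (2 + w x) / K)"
      using int_w by auto
    have "(LINT x|P. (2 + w x) / K) = (LINT x|P. 2 + w x) / K"
      by simp
    also have "\<dots> = 1"
      using int_w K unfolding K_def by (simp add: P.prob_space)
    finally show "(LINT x|P. (2 + w x) / K) = 1" .
    show "real_distribution \<mu>"
      unfolding law[symmetric] by (intro P.real_distribution_distr) simp
    show "(CLINT x|P. ((2 + w x) / K) *\<^sub>R iexp (s * X x)) = char \<mu> s" for s
    proof -
      have int_iexp: "integrable P (\<lambda>x. iexp (s * X x))"
        by (rule P.integrable_iexp) auto
      have int_w_iexp: "integrable P (\<lambda>x. complex_of_real (w x) * iexp (s * X x))"
        by (rule P.integrable_const_bound[where B=1]) (use w_bounded in \<open>auto simp: norm_mult\<close>)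
      have "(CLINT x|P. ((2 + w x) / K) *\<^sub>R iexp (s * X x))
          = (CLINT x|P. (2 / K) * iexp (s * X x) + (1 / K) * (complex_of_real (w x) * iexp (s * X x)))"
        by (intro Bochner_Integration.integral_cong refl)
          (simp add: scaleR_conv_of_real add_divide_distrib algebra_simps)
      also have "\<dots> = (2 / K) * (CLINT x|P. iexp (s * X x))
          + (1 / K) * (CLINT x|P. complex_of_real (w x) * iexp (s * X x))"
        using int_iexp int_w_iexp by simp
      also have "\<dots> = char \<mu> s * ((2 + complex_of_real (LINT x|P. w x)) / K)"
        unfolding char_X char_w using K by (simp add: field_simps)
      also have "2 + complex_of_real (LINT x|P. w x) = complex_of_real K"
        by (simp add: K_def)
      finally show ?thesis
        using K by simp
    qed
  qed simp
qed

lemma integral_indicator_mult_eq_of_char: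
  fixes X w :: "'a \<Rightarrow> real"
  assumes P: "prob_space P"
    and X_meas[measurable]: "X \<in> borel_measurable P" and w_meas[measurable]: "w \<in> borel_measurable P"
    and [measurable]: "A \<in> sets borel"
    and w_bounded: "\<And>x. \<bar>w x\<bar> \<le> 1"
    and law: "distr P borel X = \<mu>"
    and char_w: "\<And>s. (CLINT x|P. w x * iexp (s * X x)) = char \<mu> s * (LINT x|P. w x)"
  shows "(LINT x|P. indicator A (X x) * w x) = measure \<mu> A * (LINT x|P. w x)"
proof -
  interpret P: prob_space P by fact
  have int_w: "integrable P w"
    by (rule P.integrable_const_bound[where B=1]) (use w_bounded in auto)
  have int_A: "integrable P (\<lambda>x. indicator A (X x) :: real)"
    by (rule P.integrable_const_bound[where B=1]) auto
  have int_A_w: "integrable P (\<lambda>x. indicator A (X x) * w x)"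
    by (rule P.integrable_const_bound[where B=1])
      (use w_bounded in \<open>auto simp: abs_mult indicator_def\<close>)
  have measure_A: "(LINT x|P. indicator A (X x)) = measure \<mu> A"
  proof -
    have "measure \<mu> A = (LINT x|distr P borel X. indicator A x)"
      unfolding law[symmetric] by simp
    also have "\<dots> = (LINT x|P. indicator A (X x))"
      by (rule integral_distr) auto
    finally show ?thesis by simp
  qed
  define K where "K = 2 + (LINT x|P. w x)"
  have "-1 \<le> (LINT x|P. w x)"
    using int_w w_bounded by (intro P.integral_ge_const AE_I2) (auto simp: abs_le_iff)
  then have K: "K \<ge> 1"
    unfolding K_def by linarith
  have density_nonneg: "(2 + w x) / K \<ge> 0" for x
    using w_bounded[of x] K by (auto simp: abs_le_iff intro!: divide_nonneg_pos)
  let ?Q = "density P (\<lambda>x. ennreal ((2 + w x) / K))"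
  have law_Q: "distr ?Q borel X = \<mu>"
    unfolding K_def by (rule distr_tilted_eq_of_char[OF P X_meas w_meas w_bounded law char_w])
  have "measure \<mu> A = (LINT x|distr ?Q borel X. indicator A x)"
    unfolding law_Q[symmetric] by simp
  also have "\<dots> = (LINT x|?Q. indicator A (X x))"
    by (rule integral_distr) auto
  also have "\<dots> = (LINT x|P. ((2 + w x) / K) * indicator A (X x))"
    by (subst integral_density) (use density_nonneg in auto)
  also have "\<dots> = (LINT x|P. (2 / K) * indicator A (X x) + (1 / K) * (indicator A (X x) * w x))"
    by (intro Bochner_Integration.integral_cong refl) (simp add: add_divide_distrib algebra_simps)
  also have "\<dots> = (2 / K) * measure \<mu> A + (1 / K) * (LINT x|P. indicator A (X x) * w x)"
    using int_A int_A_w by (simp add: measure_A)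
  finally have "K * measure \<mu> A = 2 * measure \<mu> A + (LINT x|P. indicator A (X x) * w x)"
    using K by (simp add: field_simps)
  then show ?thesis
    unfolding K_def by (simp add: algebra_simps)
qed

lemma iexp_add: "iexp (u + v) = iexp u * iexp v"
  by (simp add: distrib_left exp_add)

lemma iexp_eq_cos_sin: "iexp t = complex_of_real (cos t) + \<i> * complex_of_real (sin t)"
  by (simp add: cis_conv_exp[symmetric] complex_eq_iff)

lemma integral_mult_iexp_eq_cos_sin:
  fixes f \<theta> :: "'a \<Rightarrow> real"
  assumes "integrable M (\<lambda>x. f x * cos (\<theta> x))" "integrable M (\<lambda>x. f x * sin (\<theta> x))"
  shows "(CLINT x|M. complex_of_real (f x) * iexp (\<theta> x))
       = complex_of_real (LINT x|M. f x * cos (\<theta> x)) + \<i> * complex_of_real (LINT x|M. f x * sin (\<theta> x))"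
proof -
  have "(CLINT x|M. complex_of_real (f x) * iexp (\<theta> x))
      = (CLINT x|M. complex_of_real (f x * cos (\<theta> x)) + \<i> * complex_of_real (f x * sin (\<theta> x)))"
    by (intro Bochner_Integration.integral_cong refl) (simp add: iexp_eq_cos_sin algebra_simps)
  also have "\<dots> = complex_of_real (LINT x|M. f x * cos (\<theta> x))
      + \<i> * complex_of_real (LINT x|M. f x * sin (\<theta> x))"
  proof -
    have "integrable M (\<lambda>x. complex_of_real (f x * cos (\<theta> x)))"
      using assms(1) by (rule integrable_of_real)
    moreover have "integrable M (\<lambda>x. \<i> * complex_of_real (f x * sin (\<theta> x)))"
      using assms(2) by (intro integrable_mult_right integrable_of_real)
    ultimately show ?thesis
      by (simp only: Bochner_Integration.integral_add integral_mult_right_zero integral_complex_of_real)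
  qed
  finally show ?thesis .
qed

lemma integral_indicator_mult_eq_of_iexp_combination:
  fixes X \<theta> w :: "'a \<Rightarrow> real" and a b c d :: complex
  assumes P: "prob_space P"
    and X_meas[measurable]: "X \<in> borel_measurable P"
    and \<theta>_meas[measurable]: "\<theta> \<in> borel_measurable P"
    and w_meas[measurable]: "w \<in> borel_measurable P"
    and A_sets[measurable]: "A \<in> sets borel"
    and w_bounded: "\<And>x. \<bar>w x\<bar> \<le> 1"
    and w_eq: "\<And>x. complex_of_real (w x) = a * iexp (\<theta> x) + b * iexp (- \<theta> x)"
    and law: "distr P borel X = \<mu>"
    and char_plus: "\<And>s. (CLINT x|P. iexp (s * X x + \<theta> x)) = char \<mu> s * c"
    and char_minus: "\<And>s. (CLINT x|P. iexp (s * X x - \<theta> x)) = char \<mu> s * d"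
  shows "(LINT x|P. indicator A (X x) * w x) = measure \<mu> A * (LINT x|P. w x)"
proof -
  interpret P: prob_space P by fact
  have char_0: "char \<mu> 0 = 1"
    unfolding law[symmetric] by (intro real_distribution.char_zero P.real_distribution_distr) simp
  have integrable_plus: "integrable P (\<lambda>x. iexp (s * X x + \<theta> x))" for s
    by (rule P.integrable_iexp) simp_all
  have integrable_minus: "integrable P (\<lambda>x. iexp (s * X x - \<theta> x))" for s
    by (rule P.integrable_iexp) simp_all
  have integrand: "complex_of_real (w x) * iexp (s * X x)
      = a * iexp (s * X x + \<theta> x) + b * iexp (s * X x - \<theta> x)" for s x
  proof -
    have "iexp (s * X x + \<theta> x) = iexp (s * X x) * iexp (\<theta> x)"
      by (rule iexp_add)
    moreover have "iexp (s * X x - \<theta> x) = iexp (s * X x) * iexp (- \<theta> x)"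
      using iexp_add[of "s * X x" "- \<theta> x"] by simp
    ultimately show ?thesis
      unfolding w_eq by (simp add: algebra_simps)
  qed
  have char_w: "(CLINT x|P. w x * iexp (s * X x)) = char \<mu> s * (a * c + b * d)" for s
  proof -
    have "(CLINT x|P. w x * iexp (s * X x))
        = a * (CLINT x|P. iexp (s * X x + \<theta> x)) + b * (CLINT x|P. iexp (s * X x - \<theta> x))"
      unfolding integrand using integrable_plus integrable_minus by simp
    also have "\<dots> = a * (char \<mu> s * c) + b * (char \<mu> s * d)"
      unfolding char_plus char_minus ..
    also have "\<dots> = char \<mu> s * (a * c + b * d)"
      by (simp add: algebra_simps)
    finally show ?thesis .
  qed
  from char_w[of 0] have integral_w: "complex_of_real (LINT x|P. w x) = a * c + b * d"
    by (simp add: char_0)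
  have "(CLINT x|P. w x * iexp (s * X x)) = char \<mu> s * (LINT x|P. w x)" for s
    unfolding char_w integral_w ..
  with P X_meas w_meas A_sets w_bounded law show ?thesis
    by (rule integral_indicator_mult_eq_of_char)
qed

lemma integral_indicator_mult_iexp_eq_of_char:
  fixes X \<theta> :: "'a \<Rightarrow> real" and c d :: complex
  assumes P: "prob_space P"
    and X_meas[measurable]: "X \<in> borel_measurable P"
    and \<theta>_meas[measurable]: "\<theta> \<in> borel_measurable P"
    and A_sets[measurable]: "A \<in> sets borel"
    and law: "distr P borel X = \<mu>"
    and char_plus: "\<And>s. (CLINT x|P. iexp (s * X x + \<theta> x)) = char \<mu> s * c"
    and char_minus: "\<And>s. (CLINT x|P. iexp (s * X x - \<theta> x)) = char \<mu> s * d"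
  shows "(CLINT x|P. indicator A (X x) * iexp (\<theta> x)) = measure \<mu> A * c"
proof -
  interpret P: prob_space P by fact
  have cos_meas: "(\<lambda>x. cos (\<theta> x)) \<in> borel_measurable P"
    by measurable
  have sin_meas: "(\<lambda>x. sin (\<theta> x)) \<in> borel_measurable P"
    by measurable
  have cos_eq: "complex_of_real (cos (\<theta> x)) = 1 / 2 * iexp (\<theta> x) + 1 / 2 * iexp (- \<theta> x)"
    and sin_eq: "complex_of_real (sin (\<theta> x)) = - \<i> / 2 * iexp (\<theta> x) + \<i> / 2 * iexp (- \<theta> x)" for x
    using iexp_eq_cos_sin[of "- \<theta> x"] by (simp_all add: iexp_eq_cos_sin complex_eq_iff)
  note combination = integral_indicator_mult_eq_of_iexp_combination[OF P X_meas \<theta>_meas]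
  have cos_part: "(LINT x|P. indicator A (X x) * cos (\<theta> x)) = measure \<mu> A * (LINT x|P. cos (\<theta> x))"
    by (rule combination[OF cos_meas A_sets _ cos_eq law char_plus char_minus]) simp
  have sin_part: "(LINT x|P. indicator A (X x) * sin (\<theta> x)) = measure \<mu> A * (LINT x|P. sin (\<theta> x))"
    by (rule combination[OF sin_meas A_sets _ sin_eq law char_plus char_minus]) simp
  have char_0: "char \<mu> 0 = 1"
    unfolding law[symmetric] by (intro real_distribution.char_zero P.real_distribution_distr) simp
  have int_A_cos: "integrable P (\<lambda>x. indicator A (X x) * cos (\<theta> x))"
    and int_A_sin: "integrable P (\<lambda>x. indicator A (X x) * sin (\<theta> x))"
    and int_cos: "integrable P (\<lambda>x. cos (\<theta> x))"
    and int_sin: "integrable P (\<lambda>x. sin (\<theta> x))"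
    by (auto intro!: P.integrable_const_bound[where B=1] AE_I2 simp: abs_mult indicator_def)
  have "(CLINT x|P. indicator A (X x) * iexp (\<theta> x))
      = (CLINT x|P. complex_of_real (indicator A (X x)) * iexp (\<theta> x))"
    by (simp add: of_real_indicator)
  also have "\<dots> = complex_of_real (LINT x|P. indicator A (X x) * cos (\<theta> x))
      + \<i> * complex_of_real (LINT x|P. indicator A (X x) * sin (\<theta> x))"
    by (rule integral_mult_iexp_eq_cos_sin[OF int_A_cos int_A_sin])
  also have "\<dots> = measure \<mu> A * (complex_of_real (LINT x|P. cos (\<theta> x))
      + \<i> * complex_of_real (LINT x|P. sin (\<theta> x)))"
    unfolding cos_part sin_part by (simp add: algebra_simps)
  also have "complex_of_real (LINT x|P. cos (\<theta> x)) + \<i> * complex_of_real (LINT x|P. sin (\<theta> x))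
      = (CLINT x|P. iexp (\<theta> x))"
    using int_cos int_sin by (simp add: iexp_eq_cos_sin)
  also have "\<dots> = c"
    using char_plus[of 0] by (simp add: char_0)
  finally show ?thesis .
qed

lemma
  fixes Y :: "nat \<Rightarrow> 'a \<Rightarrow> real" and \<mu> :: "nat \<Rightarrow> real measure"
  assumes P: "prob_space P"
    and Y_meas: "\<And>j. j < Suc m \<Longrightarrow> Y j \<in> borel_measurable P"
    and \<mu>: "\<And>j. j < Suc m \<Longrightarrow> real_distribution (\<mu> j)"
    and char_Y: "\<And>c. (CLINT x|P. iexp (\<Sum>j<Suc m. c j * Y j x)) = (\<Prod>j<Suc m. char (\<mu> j) (c j))"
  shows distr_last_eq_of_char: "distr P borel (Y m) = \<mu> m"
    and integral_indicator_last_mult_iexp_eq_of_char: "A \<in> sets borel \<Longrightarrow>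
      (CLINT x|P. indicator A (Y m x) * iexp (\<Sum>j<m. t j * Y j x)) = measure (\<mu> m) A * (\<Prod>j<m. char (\<mu> j) (t j))"
proof -
  interpret P: prob_space P by fact
  have [measurable]: "Y j \<in> borel_measurable P" if "j < m" for j
    using Y_meas that by simp
  have last_meas[measurable]: "Y m \<in> borel_measurable P"
    using Y_meas by simp
  define \<theta> where "\<theta> t x = (\<Sum>j<m. t j * Y j x)" for t x
  define \<phi> where "\<phi> t = (\<Prod>j<m. char (\<mu> j) (t j))" for t
  have \<theta>_meas[measurable]: "\<theta> t \<in> borel_measurable P" for t
    unfolding \<theta>_def by measurable
  have char_step: "(CLINT x|P. iexp (s * Y m x + \<theta> t x)) = char (\<mu> m) s * \<phi> t" for s t
  proof -
    have "(\<Sum>j<Suc m. (t(m := s)) j * Y j x) = s * Y m x + \<theta> t x" for x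
      unfolding \<theta>_def by (auto intro!: sum.cong)
    moreover have "(\<Prod>j<Suc m. char (\<mu> j) ((t(m := s)) j)) = char (\<mu> m) s * \<phi> t"
      unfolding \<phi>_def by (auto intro!: prod.cong)
    ultimately show ?thesis
      using char_Y by (metis (no_types, lifting) ext)
  qed
  show law: "distr P borel (Y m) = \<mu> m"
  proof (rule Levy_uniqueness)
    show "real_distribution (distr P borel (Y m))"
      by (intro P.real_distribution_distr) simp
    show "real_distribution (\<mu> m)"
      by (rule \<mu>) simp
    have \<phi>_0: "\<phi> (\<lambda>j. 0) = 1"
      unfolding \<phi>_def using \<mu> by (auto intro!: prod.neutral real_distribution.char_zero)
    show "char (distr P borel (Y m)) = char (\<mu> m)"
    proof
      fix s
      have "char (distr P borel (Y m)) s = (CLINT x|P. iexp (s * Y m x + \<theta> (\<lambda>j. 0) x))"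
        unfolding char_def \<theta>_def by (subst integral_distr) auto
      then show "char (distr P borel (Y m)) s = char (\<mu> m) s"
        using char_step \<phi>_0 by simp
    qed
  qed
  assume A_sets[measurable]: "A \<in> sets borel"
  have "(CLINT x|P. indicator A (Y m x) * iexp (\<theta> t x)) = measure (\<mu> m) A * \<phi> t"
  proof (rule integral_indicator_mult_iexp_eq_of_char[OF P last_meas \<theta>_meas A_sets law])
    show "(CLINT x|P. iexp (s * Y m x + \<theta> t x)) = char (\<mu> m) s * \<phi> t" for s
      by (rule char_step)
    show "(CLINT x|P. iexp (s * Y m x - \<theta> t x)) = char (\<mu> m) s * \<phi> (\<lambda>j. - t j)" for s
      using char_step[of s "\<lambda>j. - t j"] by (simp add: \<theta>_def sum_negf)
  qed
  then show "(CLINT x|P. indicator A (Y m x) * iexp (\<Sum>j<m. t j * Y j x))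
      = measure (\<mu> m) A * (\<Prod>j<m. char (\<mu> j) (t j))"
    unfolding \<theta>_def \<phi>_def .
qed

theorem measure_rectangle_eq_prod_of_char:
  fixes Y :: "nat \<Rightarrow> 'a \<Rightarrow> real" and \<mu> :: "nat \<Rightarrow> real measure"
  assumes "prob_space P"
    and "\<And>j. j < m \<Longrightarrow> Y j \<in> borel_measurable P"
    and "\<And>j. j < m \<Longrightarrow> real_distribution (\<mu> j)"
    and "\<And>c. (CLINT x|P. iexp (\<Sum>j<m. c j * Y j x)) = (\<Prod>j<m. char (\<mu> j) (c j))"
    and "\<And>j. j < m \<Longrightarrow> B j \<in> sets borel"
  shows "measure P {x\<in>space P. \<forall>j<m. Y j x \<in> B j} = (\<Prod>j<m. measure (\<mu> j) (B j))"
  using assms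
proof (induction m arbitrary: P)
  case 0
  then interpret P: prob_space P by simp
  show ?case by (simp add: P.prob_space)
next
  case (Suc m)
  interpret P: prob_space P by fact
  have [measurable]: "Y j \<in> borel_measurable P" "B j \<in> sets borel" if "j < Suc m" for j
    using Suc.prems that by auto
  have Y[measurable]: "Y j \<in> borel_measurable P" "B j \<in> sets borel" if "j < m" for j
    using Suc.prems that by auto
  have B_m[measurable]: "B m \<in> sets borel"
    using Suc.prems(5) by simp
  note last = distr_last_eq_of_char[OF Suc.prems(1-4)]
    integral_indicator_last_mult_iexp_eq_of_char[OF Suc.prems(1-4) B_m]
  define E where "E = {x\<in>space P. Y m x \<in> B m}"
  define R where "R = {x\<in>space P. \<forall>j<m. Y j x \<in> B j}"
  have E_sets[measurable]: "E \<in> sets P" and R_sets[measurable]: "R \<in> sets P"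
    unfolding E_def R_def by measurable
  have "measure (\<mu> m) (B m) = measure (distr P borel (Y m)) (B m)"
    by (simp add: last(1))
  also have "\<dots> = measure P E"
    unfolding E_def by (simp add: measure_distr vimage_def Int_def conj_commute)
  finally have measure_E: "measure P E = measure (\<mu> m) (B m)"
    by (rule sym)
  have rect_Suc: "{x\<in>space P. \<forall>j<Suc m. Y j x \<in> B j} = E \<inter> R"
    unfolding E_def R_def using less_Suc_eq by auto
  have prod_Suc: "(\<Prod>j<Suc m. measure (\<mu> j) (B j)) = measure P E * (\<Prod>j<m. measure (\<mu> j) (B j))"
    by (simp add: measure_E mult.commute)
  show ?case
  proof (cases "measure P E = 0")
    case True
    have "measure P (E \<inter> R) \<le> measure P E"
      by (intro P.finite_measure_mono) auto
    with True have "measure P (E \<inter> R) = 0"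
      using measure_nonneg[of P "E \<inter> R"] by linarith
    then show ?thesis
      unfolding rect_Suc prod_Suc True by simp
  next
    case False
    then have E_pos: "measure P E > 0"
      using measure_nonneg[of P E] by linarith
    then have E_emeasure: "emeasure P E \<noteq> 0" "emeasure P E \<noteq> \<infinity>"
      by (auto simp: P.emeasure_eq_measure)
    let ?Q = "uniform_measure P E"
    \<comment> \<open>conditioning on Y m \<in> B m leaves the characteristic function of the other coordinates unchanged\<close>
    have "measure ?Q {x\<in>space ?Q. \<forall>j<m. Y j x \<in> B j} = (\<Prod>j<m. measure (\<mu> j) (B j))"
    proof (rule Suc.IH)
      show "prob_space ?Q"
        by (rule prob_space_uniform_measure[OF E_emeasure])
      show "Y j \<in> borel_measurable ?Q" "real_distribution (\<mu> j)" "B j \<in> sets borel" if "j < m" for j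
        using that Y[OF that] Suc.prems(3)[of j] unfolding uniform_measure_def by simp_all
      show "(CLINT x|?Q. iexp (\<Sum>j<m. c j * Y j x)) = (\<Prod>j<m. char (\<mu> j) (c j))" for c
      proof -
        have "(CLINT x|?Q. iexp (\<Sum>j<m. c j * Y j x))
            = (1 / measure P E) *\<^sub>R (CLINT x|P. indicator E x *\<^sub>R iexp (\<Sum>j<m. c j * Y j x))"
          by (rule integral_uniform_measure) (use E_pos in auto)
        also have "(CLINT x|P. indicator E x *\<^sub>R iexp (\<Sum>j<m. c j * Y j x))
            = (CLINT x|P. indicator (B m) (Y m x) * iexp (\<Sum>j<m. c j * Y j x))"
          by (intro Bochner_Integration.integral_cong refl) (simp add: E_def indicator_def)
        also have "\<dots> = measure P E *\<^sub>R (\<Prod>j<m. char (\<mu> j) (c j))"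
          using last(2)[of c] measure_E by (simp add: scaleR_conv_of_real)
        also have "(1 / measure P E) *\<^sub>R (measure P E *\<^sub>R (\<Prod>j<m. char (\<mu> j) (c j)))
            = (\<Prod>j<m. char (\<mu> j) (c j))"
          using E_pos by (simp add: field_simps)
        finally show ?thesis .
      qed
    qed
    then have "measure P (E \<inter> R) / measure P E = (\<Prod>j<m. measure (\<mu> j) (B j))"
      using E_emeasure R_sets by (simp add: R_def[symmetric])
    with E_pos have "measure P (E \<inter> R) = measure P E * (\<Prod>j<m. measure (\<mu> j) (B j))"
      by (simp add: field_simps)
    then show ?thesis
      unfolding rect_Suc prod_Suc .
  qed
qed

section \<open>Counting successes among independent identically distributed variables\<close>

locale iid_sample = prob_space P for P :: "'a measure" +
  fixes p :: nat and Z :: "nat \<Rightarrow> 'a \<Rightarrow> real" and \<mu> :: "real measure"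
  assumes measurable_Z[measurable]: "j < p \<Longrightarrow> Z j \<in> borel_measurable P"
    and real_distribution_law: "real_distribution \<mu>"
    and measure_rectangle: "(\<And>j. j < p \<Longrightarrow> B j \<in> sets borel) \<Longrightarrow>
      measure P {x\<in>space P. \<forall>j<p. Z j x \<in> B j} = (\<Prod>j<p. measure \<mu> (B j))"
begin

lemma measure_hits_eq:
  assumes [measurable]: "A \<in> sets borel" and T: "T \<subseteq> {..<p}"
  shows "measure P {x\<in>space P. {j\<in>{..<p}. Z j x \<in> A} = T}
       = measure \<mu> A ^ card T * (1 - measure \<mu> A) ^ (p - card T)"
proof -
  interpret \<mu>: real_distribution \<mu> by (rule real_distribution_law)
  let ?q = "measure \<mu> A"
  define B where "B j = (if j \<in> T then A else - A)" for j
  have "measure P {x\<in>space P. {j\<in>{..<p}. Z j x \<in> A} = T}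
      = measure P {x\<in>space P. \<forall>j<p. Z j x \<in> B j}"
    using T by (intro arg_cong[where f="measure P"]) (auto simp: B_def)
  also have "\<dots> = (\<Prod>j<p. measure \<mu> (B j))"
    by (rule measure_rectangle) (simp add: B_def borel_comp)
  also have "\<dots> = (\<Prod>j<p. if j \<in> T then ?q else 1 - ?q)"
    using \<mu>.prob_compl[of A] by (intro prod.cong refl) (simp add: B_def Compl_eq_Diff_UNIV)
  also have "\<dots> = (\<Prod>j\<in>{..<p} \<inter> {j. j \<in> T}. ?q) * (\<Prod>j\<in>{..<p} \<inter> - {j. j \<in> T}. 1 - ?q)"
    by (rule prod.If_cases) simp
  also have "{..<p} \<inter> {j. j \<in> T} = T"
    using T by auto
  also have "{..<p} \<inter> - {j. j \<in> T} = {..<p} - T"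
    by auto
  also have "(\<Prod>j\<in>T. ?q) * (\<Prod>j\<in>{..<p} - T. 1 - ?q) = ?q ^ card T * (1 - ?q) ^ card ({..<p} - T)"
    by simp
  also have "card ({..<p} - T) = p - card T"
    using T by (simp add: card_Diff_subset finite_subset)
  finally show ?thesis .
qed

lemma
  assumes [measurable]: "A \<in> sets borel"
  shows measurable_card_hits: "(\<lambda>x. card {j\<in>{..<p}. Z j x \<in> A}) \<in> measurable P (count_space UNIV)"
    and measure_card_hits: "measure P {x\<in>space P. card {j\<in>{..<p}. Z j x \<in> A} = k}
       = pmf (binomial_pmf p (measure \<mu> A)) k"
proof -
  interpret \<mu>: real_distribution \<mu> by (rule real_distribution_law)
  let ?hits = "\<lambda>x. {j\<in>{..<p}. Z j x \<in> A}"
  define \<T> where "\<T> k = {T. T \<subseteq> {..<p} \<and> card T = k}" for k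
  have finite_\<T>: "finite (\<T> k)" for k
    unfolding \<T>_def by (rule finite_subset[of _ "Pow {..<p}"]) auto
  have hits_sets: "{x\<in>space P. ?hits x = T} \<in> sets P" if "T \<subseteq> {..<p}" for T
  proof -
    have "{x\<in>space P. ?hits x = T} = {x\<in>space P. \<forall>j<p. (j \<in> T \<longleftrightarrow> Z j x \<in> A)}"
      using that by auto
    also have "\<dots> \<in> sets P" by measurable
    finally show ?thesis .
  qed
  have card_eq: "{x\<in>space P. card (?hits x) = k} = (\<Union>T\<in>\<T> k. {x\<in>space P. ?hits x = T})" for k
    unfolding \<T>_def by auto
  have card_sets: "{x\<in>space P. card (?hits x) = k} \<in> sets P" for k
    unfolding card_eq using finite_\<T> hits_sets by (auto simp: \<T>_def)
  show "(\<lambda>x. card (?hits x)) \<in> measurable P (count_space UNIV)"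
    unfolding measurable_count_space_eq2_countable
    using card_sets by (auto simp: vimage_def Int_def conj_commute)
  have "measure P {x\<in>space P. card (?hits x) = k} = (\<Sum>T\<in>\<T> k. measure P {x\<in>space P. ?hits x = T})"
    unfolding card_eq
    by (rule finite_measure_finite_Union)
      (use finite_\<T> hits_sets in \<open>auto simp: \<T>_def disjoint_family_on_def\<close>)
  also have "\<dots> = (\<Sum>T\<in>\<T> k. measure \<mu> A ^ k * (1 - measure \<mu> A) ^ (p - k))"
  proof (intro sum.cong refl)
    fix T
    assume "T \<in> \<T> k"
    then show "measure P {x\<in>space P. ?hits x = T} = measure \<mu> A ^ k * (1 - measure \<mu> A) ^ (p - k)"
      using measure_hits_eq[OF assms, of T] by (simp add: \<T>_def)
  qed
  also have "\<dots> = real (card (\<T> k)) * (measure \<mu> A ^ k * (1 - measure \<mu> A) ^ (p - k))"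
    by simp
  also have "card (\<T> k) = p choose k"
    unfolding \<T>_def using n_subsets[of "{..<p}" k] by simp
  finally show "measure P {x\<in>space P. card (?hits x) = k} = pmf (binomial_pmf p (measure \<mu> A)) k"
    by (simp add: pmf_binomial[OF measure_nonneg \<mu>.prob_le_1])
qed

lemma distr_card_hits_eq_binomial_pmf:
  assumes [measurable]: "A \<in> sets borel"
  shows "distr P (count_space UNIV) (\<lambda>x. card {j\<in>{..<p}. Z j x \<in> A})
       = measure_pmf (binomial_pmf p (measure \<mu> A))"
proof (rule measure_eqI_countable[where A=UNIV])
  fix k
  have "emeasure (distr P (count_space UNIV) (\<lambda>x. card {j\<in>{..<p}. Z j x \<in> A})) {k}
      = emeasure P {x\<in>space P. card {j\<in>{..<p}. Z j x \<in> A} = k}"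
    using measurable_card_hits[OF assms] by (subst emeasure_distr) (auto intro!: arg_cong[where f="emeasure P"])
  also have "\<dots> = emeasure (measure_pmf (binomial_pmf p (measure \<mu> A))) {k}"
    using measure_card_hits[OF assms] by (simp add: emeasure_eq_measure emeasure_pmf_single)
  finally show "emeasure (distr P (count_space UNIV) (\<lambda>x. card {j\<in>{..<p}. Z j x \<in> A})) {k}
      = emeasure (measure_pmf (binomial_pmf p (measure \<mu> A))) {k}" .
qed (auto intro: countableI_type)

end

section \<open>The MVP-IBP model\<close>

abbreviation beta_law :: "real \<Rightarrow> nat \<Rightarrow> real measure" where
  "beta_law \<alpha> p \<equiv> normal_measure (mu_p \<alpha> p) ((tau_p p)\<^sup>2)"

abbreviation latent_law :: "real \<Rightarrow> nat \<Rightarrow> real measure" where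
  "latent_law \<alpha> p \<equiv> normal_measure (mu_p \<alpha> p) ((tau_p p)\<^sup>2 + 1)"

lemma measure_latent_law_pos:
  assumes "\<alpha> > 0" "p > 0"
  shows "measure (latent_law \<alpha> p) {0<..} = \<alpha> / (\<alpha> + real p)"
proof -
  define q where "q = \<alpha> / (\<alpha> + real p)"
  have q: "0 < q" "q < 1"
    using assms unfolding q_def by (auto simp: field_simps)
  have "measure (latent_law \<alpha> p) {0<..} = Phi (mu_p \<alpha> p / sqrt ((tau_p p)\<^sup>2 + 1))"
    by (rule measure_normal_measure_greaterThan_0) (simp add: add_nonneg_pos)
  also have "mu_p \<alpha> p / sqrt ((tau_p p)\<^sup>2 + 1) = Phi_inv q"
  proof -
    have "sqrt ((tau_p p)\<^sup>2 + 1) > 0" by (simp add: add_nonneg_pos)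
    then show ?thesis unfolding mu_p_def q_def by (simp add: add.commute)
  qed
  also have "Phi (Phi_inv q) = q"
    by (rule Phi_Phi_inv[OF q])
  finally show ?thesis unfolding q_def .
qed

lemma corr_matrix_quadratic_form_nonneg:
  assumes "corr_matrix p S"
  shows "(\<Sum>j<p. \<Sum>k<p. c j * S j k * c k) \<ge> 0"
proof (cases "\<exists>j<p. c j \<noteq> 0")
  case True
  with assms show ?thesis unfolding corr_matrix_def by (simp add: less_imp_le)
qed simp

lemma num_features_eq_card:
  "num_features p \<beta> \<epsilon> i x = real (card {j\<in>{..<p}. \<beta> j x + \<epsilon> i j x > 0})"
proof -
  have "num_features p \<beta> \<epsilon> i x
      = (\<Sum>j\<in>{..<p} \<inter> {j. \<beta> j x + \<epsilon> i j x > 0}. 1) + (\<Sum>j\<in>{..<p} \<inter> - {j. \<beta> j x + \<epsilon> i j x > 0}. 0)"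
    unfolding num_features_def by (rule sum.If_cases) simp
  also have "{..<p} \<inter> {j. \<beta> j x + \<epsilon> i j x > 0} = {j\<in>{..<p}. \<beta> j x + \<epsilon> i j x > 0}"
    by auto
  finally show ?thesis by simp
qed

locale mvp_ibp_object =
  fixes P :: "'a measure" and p :: nat and \<alpha> :: real and n :: nat
    and S :: "nat \<Rightarrow> nat \<Rightarrow> real" and \<beta> :: "nat \<Rightarrow> 'a \<Rightarrow> real"
    and \<epsilon> :: "nat \<Rightarrow> nat \<Rightarrow> 'a \<Rightarrow> real" and i :: nat
  assumes model: "mvp_ibp P p \<alpha> n S \<beta> \<epsilon>" and object: "i < n"
begin

lemma prob_space_model: "prob_space P"
  using model by (simp add: mvp_ibp_def)

sublocale prob_space P
  by (fact prob_space_model)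

lemma measurable_beta[measurable]: "j < p \<Longrightarrow> \<beta> j \<in> borel_measurable P"
  using model by (simp add: mvp_ibp_def)

lemma measurable_eps[measurable]: "j < p \<Longrightarrow> \<epsilon> i j \<in> borel_measurable P"
  using model object by (simp add: mvp_ibp_def mvn0_def)

lemma integral_iexp_beta_sum:
  "(CLINT x|P. iexp (\<Sum>j<p. c j * \<beta> j x)) = (\<Prod>j<p. char (beta_law \<alpha> p) (c j))"
proof -
  have "indep_vars (\<lambda>_. borel) \<beta> {..<p}"
    using model by (simp add: mvp_ibp_def)
  then have indep: "indep_vars (\<lambda>_. borel) (\<lambda>j x. iexp (c j * \<beta> j x)) {..<p}"
    by (rule indep_vars_compose2) measurable
  have "(CLINT x|P. iexp (\<Sum>j<p. c j * \<beta> j x)) = (CLINT x|P. (\<Prod>j<p. iexp (c j * \<beta> j x)))"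
    by (simp add: exp_sum[symmetric] sum_distrib_left)
  also have "\<dots> = (\<Prod>j<p. (CLINT x|P. iexp (c j * \<beta> j x)))"
    by (rule indep_vars_lebesgue_integral[OF _ indep]) (auto intro!: integrable_iexp)
  also have "\<dots> = (\<Prod>j<p. char (beta_law \<alpha> p) (c j))"
  proof (rule prod.cong[OF refl])
    fix j
    assume j: "j \<in> {..<p}"
    then have "char (beta_law \<alpha> p) (c j) = char (distr P borel (\<beta> j)) (c j)"
      using model by (simp add: mvp_ibp_def)
    also have "\<dots> = (CLINT x|P. iexp (c j * \<beta> j x))"
      unfolding char_def using j by (subst integral_distr) auto
    finally show "(CLINT x|P. iexp (c j * \<beta> j x)) = char (beta_law \<alpha> p) (c j)" ..
  qed
  finally show ?thesis .
qed

lemma integral_iexp_eps_sum: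
  "(CLINT x|P. iexp (\<Sum>j<p. c j * \<epsilon> i j x))
     = complex_of_real (exp (- (\<Sum>j<p. \<Sum>k<p. c j * S j k * c k) / 2))"
proof -
  have "(CLINT x|P. iexp (\<Sum>j<p. c j * \<epsilon> i j x)) = char (distr P borel (\<lambda>x. \<Sum>j<p. c j * \<epsilon> i j x)) 1"
    unfolding char_def by (subst integral_distr) auto
  also have "distr P borel (\<lambda>x. \<Sum>j<p. c j * \<epsilon> i j x) = normal_measure 0 (\<Sum>j<p. \<Sum>k<p. c j * S j k * c k)"
    using model object by (simp add: mvp_ibp_def mvn0_def)
  also have "char \<dots> 1 = complex_of_real (exp (- (\<Sum>j<p. \<Sum>k<p. c j * S j k * c k) / 2))"
    using model corr_matrix_quadratic_form_nonneg[of p S c]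
    by (subst char_normal_measure) (auto simp: mvp_ibp_def)
  finally show ?thesis .
qed

lemma integral_iexp_latent_sum:
  "(CLINT x|P. iexp (\<Sum>j<p. c j * (\<beta> j x + \<epsilon> i j x)))
     = (\<Prod>j<p. char (beta_law \<alpha> p) (c j))
       * complex_of_real (exp (- (\<Sum>j<p. \<Sum>k<p. c j * S j k * c k) / 2))"
proof -
  define F where "F = (\<lambda>k \<omega>. case k of None \<Rightarrow> (\<lambda>j\<in>{..<p}. \<beta> j \<omega>)
                     | Some i \<Rightarrow> (\<lambda>j\<in>{..<p}. \<epsilon> i j \<omega>))"
  define G where "G k v = iexp (\<Sum>j<p. c j * v j)" for k :: "nat option" and v :: "nat \<Rightarrow> real"
  have blocks: "indep_vars (\<lambda>_. Pi\<^sub>M {..<p} (\<lambda>_. borel)) F (insert None (Some ` {..<n}))"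
    using model unfolding F_def by (simp add: mvp_ibp_def)
  have G_meas: "G k \<in> borel_measurable (Pi\<^sub>M {..<p} (\<lambda>_. borel))" for k
    unfolding G_def by measurable
  have indep: "indep_vars (\<lambda>_. borel) (\<lambda>k x. G k (F k x)) {None, Some i}"
    by (rule indep_vars_subset[OF indep_vars_compose2[OF blocks G_meas]]) (use object in auto)
  have G_beta: "G None (F None x) = iexp (\<Sum>j<p. c j * \<beta> j x)" for x
    unfolding G_def F_def by (auto intro!: arg_cong[where f=iexp] sum.cong)
  have G_eps: "G (Some i) (F (Some i) x) = iexp (\<Sum>j<p. c j * \<epsilon> i j x)" for x
    unfolding G_def F_def by (auto intro!: arg_cong[where f=iexp] sum.cong)
  have "(CLINT x|P. iexp (\<Sum>j<p. c j * (\<beta> j x + \<epsilon> i j x))) = (CLINT x|P. (\<Prod>k\<in>{None, Some i}. G k (F k x)))"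
  proof (intro Bochner_Integration.integral_cong refl)
    fix x
    have "(\<Prod>k\<in>{None, Some i}. G k (F k x)) = iexp (\<Sum>j<p. c j * \<beta> j x) * iexp (\<Sum>j<p. c j * \<epsilon> i j x)"
      by (simp add: G_beta G_eps)
    also have "\<dots> = iexp (\<Sum>j<p. c j * (\<beta> j x + \<epsilon> i j x))"
      by (simp add: distrib_left sum.distrib exp_add[symmetric] algebra_simps)
    finally show "iexp (\<Sum>j<p. c j * (\<beta> j x + \<epsilon> i j x)) = (\<Prod>k\<in>{None, Some i}. G k (F k x))" ..
  qed
  also have "\<dots> = (\<Prod>k\<in>{None, Some i}. (CLINT x|P. G k (F k x)))"
    by (rule indep_vars_lebesgue_integral[OF _ indep]) (auto simp: G_beta G_eps intro!: integrable_iexp)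
  also have "\<dots> = (CLINT x|P. iexp (\<Sum>j<p. c j * \<beta> j x)) * (CLINT x|P. iexp (\<Sum>j<p. c j * \<epsilon> i j x))"
    by (simp add: G_beta G_eps)
  finally show ?thesis
    by (simp only: integral_iexp_beta_sum integral_iexp_eps_sum)
qed

lemma distr_latent:
  assumes j: "j < p"
  shows "distr P borel (\<lambda>x. \<beta> j x + \<epsilon> i j x) = latent_law \<alpha> p"
proof (rule Levy_uniqueness)
  have [measurable]: "\<beta> j \<in> borel_measurable P" "\<epsilon> i j \<in> borel_measurable P"
    using j by (simp_all add: measurable_beta measurable_eps)
  show "real_distribution (distr P borel (\<lambda>x. \<beta> j x + \<epsilon> i j x))"
    by (intro real_distribution_distr) simp
  show "real_distribution (latent_law \<alpha> p)"
    by (rule real_distribution_normal_measure) simp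
  show "char (distr P borel (\<lambda>x. \<beta> j x + \<epsilon> i j x)) = char (latent_law \<alpha> p)"
  proof
    fix t
    have if_mult: "(if b then y else 0) * z = (if b then y * z else 0)"
      "z * (if b then y else 0) = (if b then z * y else 0)" for b and y z :: real
      by simp_all
    define c :: "nat \<Rightarrow> real" where "c k = (if k = j then t else 0)" for k
    have sum_c: "(\<Sum>k<p. c k * (\<beta> k x + \<epsilon> i k x)) = t * (\<beta> j x + \<epsilon> i j x)" for x
      unfolding c_def using j by (simp add: if_mult sum.delta)
    have "S j j = 1"
      using model j by (simp add: mvp_ibp_def corr_matrix_def)
    then have quadratic_form: "(\<Sum>k<p. \<Sum>l<p. c k * S k l * c l) = t\<^sup>2"
      unfolding c_def using j by (simp add: if_mult sum.delta power2_eq_square)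
    have char_0: "char (beta_law \<alpha> p) 0 = 1"
      by (intro real_distribution.char_zero real_distribution_normal_measure) simp
    have "(\<Prod>k<p. char (beta_law \<alpha> p) (c k)) = (\<Prod>k<p. if k = j then char (beta_law \<alpha> p) t else 1)"
      by (intro prod.cong refl) (simp add: c_def char_0)
    also have "\<dots> = char (beta_law \<alpha> p) t"
      using j by (simp add: prod.delta)
    finally have product: "(\<Prod>k<p. char (beta_law \<alpha> p) (c k)) = char (beta_law \<alpha> p) t" .
    have "char (distr P borel (\<lambda>x. \<beta> j x + \<epsilon> i j x)) t
        = (CLINT x|P. iexp (\<Sum>k<p. c k * (\<beta> k x + \<epsilon> i k x)))"
      unfolding char_def sum_c by (subst integral_distr) auto
    also have "\<dots> = char (beta_law \<alpha> p) t * complex_of_real (exp (- t\<^sup>2 / 2))"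
      unfolding integral_iexp_latent_sum quadratic_form product ..
    also have "\<dots> = char (latent_law \<alpha> p) t"
      by (simp add: char_normal_measure_add_1)
    finally show "char (distr P borel (\<lambda>x. \<beta> j x + \<epsilon> i j x)) t = char (latent_law \<alpha> p) t" .
  qed
qed

lemma prob_latent_pos:
  assumes "\<alpha> > 0" and j: "j < p"
  shows "prob {x\<in>space P. \<beta> j x + \<epsilon> i j x > 0} = \<alpha> / (\<alpha> + real p)"
proof -
  have [measurable]: "\<beta> j \<in> borel_measurable P" "\<epsilon> i j \<in> borel_measurable P"
    using j by (simp_all add: measurable_beta measurable_eps)
  have "prob {x\<in>space P. \<beta> j x + \<epsilon> i j x > 0} = measure (distr P borel (\<lambda>x. \<beta> j x + \<epsilon> i j x)) {0<..}"
    by (subst measure_distr) (auto intro!: arg_cong[where f=prob])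
  also have "\<dots> = \<alpha> / (\<alpha> + real p)"
    using assms by (simp add: distr_latent measure_latent_law_pos)
  finally show ?thesis .
qed

lemma integral_num_features:
  assumes "\<alpha> > 0"
  shows "expectation (num_features p \<beta> \<epsilon> i) = real p * \<alpha> / (\<alpha> + real p)"
proof -
  have integrable: "integrable P (\<lambda>x. if \<beta> j x + \<epsilon> i j x > 0 then 1 else 0 :: real)" if "j < p" for j
    by (rule integrable_const_bound[where B=1]) (use that in auto)
  have expectation: "expectation (\<lambda>x. if \<beta> j x + \<epsilon> i j x > 0 then 1 else 0) = \<alpha> / (\<alpha> + real p)"
    if j: "j < p" for j
  proof -
    have "expectation (\<lambda>x. if \<beta> j x + \<epsilon> i j x > 0 then 1 else 0)
        = expectation (\<lambda>x. indicator {x\<in>space P. \<beta> j x + \<epsilon> i j x > 0} x)"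
      by (intro Bochner_Integration.integral_cong refl) (auto simp: indicator_def)
    also have "\<dots> = prob {x\<in>space P. \<beta> j x + \<epsilon> i j x > 0}"
      using j by (simp add: Int_absorb2)
    also have "\<dots> = \<alpha> / (\<alpha> + real p)"
      using assms j by (rule prob_latent_pos)
    finally show ?thesis .
  qed
  have "expectation (num_features p \<beta> \<epsilon> i)
      = (\<Sum>j<p. expectation (\<lambda>x. if \<beta> j x + \<epsilon> i j x > 0 then 1 else 0))"
    unfolding num_features_def by (rule Bochner_Integration.integral_sum) (use integrable in auto)
  also have "\<dots> = (\<Sum>j<p. \<alpha> / (\<alpha> + real p))"
    using expectation by (intro sum.cong) auto
  finally show ?thesis by simp
qed

lemma integral_iexp_latent_sum_identity:
  assumes identity: "\<And>j k. j < p \<Longrightarrow> k < p \<Longrightarrow> S j k = (if j = k then 1 else 0)"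
  shows "(CLINT x|P. iexp (\<Sum>j<p. c j * (\<beta> j x + \<epsilon> i j x))) = (\<Prod>j<p. char (latent_law \<alpha> p) (c j))"
proof -
  have quadratic_form: "(\<Sum>j<p. \<Sum>k<p. c j * S j k * c k) = (\<Sum>j<p. (c j)\<^sup>2)"
  proof (rule sum.cong[OF refl])
    fix j
    assume j: "j \<in> {..<p}"
    have "(\<Sum>k<p. c j * S j k * c k) = (\<Sum>k<p. if j = k then c j * c k else 0)"
      using identity j by (intro sum.cong refl) auto
    also have "\<dots> = (c j)\<^sup>2"
      using j by (simp add: power2_eq_square)
    finally show "(\<Sum>k<p. c j * S j k * c k) = (c j)\<^sup>2" .
  qed
  have "- (\<Sum>j<p. (c j)\<^sup>2) / 2 = (\<Sum>j<p. - (c j)\<^sup>2 / 2)"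
    by (simp add: sum_negf sum_divide_distrib)
  then have exp_sum_squares:
    "complex_of_real (exp (- (\<Sum>j<p. (c j)\<^sup>2) / 2)) = (\<Prod>j<p. complex_of_real (exp (- (c j)\<^sup>2 / 2)))"
    by (simp add: exp_sum)
  have "(CLINT x|P. iexp (\<Sum>j<p. c j * (\<beta> j x + \<epsilon> i j x)))
      = (\<Prod>j<p. char (beta_law \<alpha> p) (c j)) * (\<Prod>j<p. complex_of_real (exp (- (c j)\<^sup>2 / 2)))"
    unfolding integral_iexp_latent_sum quadratic_form exp_sum_squares ..
  also have "\<dots> = (\<Prod>j<p. char (latent_law \<alpha> p) (c j))"
    by (simp add: char_normal_measure_add_1 prod.distrib)
  finally show ?thesis .
qed

lemma iid_sample_latent:
  assumes identity: "\<And>j k. j < p \<Longrightarrow> k < p \<Longrightarrow> S j k = (if j = k then 1 else 0)"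
  shows "iid_sample P p (\<lambda>j x. \<beta> j x + \<epsilon> i j x) (latent_law \<alpha> p)"
proof (intro iid_sample.intro iid_sample_axioms.intro)
  show "prob_space P"
    by (fact prob_space_model)
  show latent_meas: "(\<lambda>x. \<beta> j x + \<epsilon> i j x) \<in> borel_measurable P" if "j < p" for j
    using that by (intro borel_measurable_add measurable_beta measurable_eps)
  show real_distribution_latent: "real_distribution (latent_law \<alpha> p)"
    by (rule real_distribution_normal_measure) simp
  show "measure P {x\<in>space P. \<forall>j<p. \<beta> j x + \<epsilon> i j x \<in> B j} = (\<Prod>j<p. measure (latent_law \<alpha> p) (B j))"
    if B_sets: "\<And>j. j < p \<Longrightarrow> B j \<in> sets borel" for B
    by (rule measure_rectangle_eq_prod_of_char[OF prob_space_model latent_meas real_distribution_latent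
          integral_iexp_latent_sum_identity[OF identity] B_sets])
qed

lemma distr_num_features_eq_binomial:
  assumes identity: "\<And>j k. j < p \<Longrightarrow> k < p \<Longrightarrow> S j k = (if j = k then 1 else 0)"
  shows "distr P borel (num_features p \<beta> \<epsilon> i)
       = distr (measure_pmf (binomial_pmf p (measure (latent_law \<alpha> p) {0<..}))) borel real"
proof -
  interpret latent: iid_sample P p "\<lambda>j x. \<beta> j x + \<epsilon> i j x" "latent_law \<alpha> p"
    by (rule iid_sample_latent[OF identity])
  let ?count = "\<lambda>x. card {j\<in>{..<p}. \<beta> j x + \<epsilon> i j x \<in> {0<..}}"
  have "num_features p \<beta> \<epsilon> i = real \<circ> ?count"
    by (simp add: fun_eq_iff num_features_eq_card)
  then have "distr P borel (num_features p \<beta> \<epsilon> i) = distr (distr P (count_space UNIV) ?count) borel real"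
    using latent.measurable_card_hits[of "{0<..}"] by (simp add: distr_distr)
  also have "distr P (count_space UNIV) ?count = measure_pmf (binomial_pmf p (measure (latent_law \<alpha> p) {0<..}))"
    by (rule latent.distr_card_hits_eq_binomial_pmf) simp
  finally show ?thesis .
qed

end

section \<open>The Poisson limit\<close>

lemma weak_conv_m_distr_real_pmf:
  fixes Q :: "nat \<Rightarrow> nat pmf" and R :: "nat pmf"
  assumes "\<And>k. (\<lambda>p. pmf (Q p) k) \<longlonglongrightarrow> pmf R k"
  shows "weak_conv_m (\<lambda>p. distr (measure_pmf (Q p)) borel real) (distr (measure_pmf R) borel real)"
  unfolding weak_conv_m_def weak_conv_def
proof (intro allI impI)
  fix y :: real
  define K where "K = {k::nat. real k \<le> y}"
  have "finite K"
  proof (rule finite_subset[of _ "{..nat \<lceil>y\<rceil>}"])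
    show "K \<subseteq> {..nat \<lceil>y\<rceil>}"
      unfolding K_def by (auto simp: le_nat_iff) linarith
  qed simp
  have cdf_eq: "cdf (distr (measure_pmf D) borel real) y = (\<Sum>k\<in>K. pmf D k)" for D
  proof -
    have "cdf (distr (measure_pmf D) borel real) y = measure (measure_pmf D) K"
      unfolding cdf_def K_def by (subst measure_distr) (auto simp: vimage_def)
    also have "\<dots> = (\<Sum>k\<in>K. pmf D k)"
      by (rule measure_measure_pmf_finite[OF \<open>finite K\<close>])
    finally show ?thesis .
  qed
  show "(\<lambda>p. cdf (distr (measure_pmf (Q p)) borel real) y) \<longlonglongrightarrow> cdf (distr (measure_pmf R) borel real) y"
    unfolding cdf_eq by (intro tendsto_sum assms)
qed

lemma pmf_binomial_eq_prod:
  assumes "0 \<le> q" "q < 1" "k \<le> p"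
  shows "pmf (binomial_pmf p q) k
       = 1 / fact k * (\<Prod>i<k. (real p - real i) * q) * (1 - q) ^ p / (1 - q) ^ k"
proof -
  have "real (p choose k) * q ^ k = 1 / fact k * (\<Prod>i<k. (real p - real i) * q)"
    by (simp add: binomial_gbinomial gbinomial_prod_rev atLeast0LessThan prod.distrib)
  moreover have "(1 - q) ^ (p - k) = (1 - q) ^ p / (1 - q) ^ k"
    using assms by (simp add: power_diff)
  ultimately show ?thesis
    using assms by (simp add: pmf_binomial)
qed

lemma pmf_binomial_tendsto_poisson:
  assumes \<alpha>: "\<alpha> > 0"
  shows "(\<lambda>p. pmf (binomial_pmf p (\<alpha> / (\<alpha> + real p))) k) \<longlonglongrightarrow> pmf (poisson_pmf \<alpha>) k"
proof -
  have factor: "(\<lambda>p. (real p - real i) * \<alpha> / (\<alpha> + real p)) \<longlonglongrightarrow> \<alpha>" for i :: nat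
    using \<alpha> by real_asymp
  have power_p: "(\<lambda>p. (1 - \<alpha> / (\<alpha> + real p)) ^ p) \<longlonglongrightarrow> exp (- \<alpha>)"
    using \<alpha> by real_asymp
  have power_k: "(\<lambda>p. (1 - \<alpha> / (\<alpha> + real p)) ^ k) \<longlonglongrightarrow> 1"
    using \<alpha> by real_asymp
  have "(\<lambda>p. 1 / fact k * (\<Prod>i<k. (real p - real i) * (\<alpha> / (\<alpha> + real p)))
        * (1 - \<alpha> / (\<alpha> + real p)) ^ p / (1 - \<alpha> / (\<alpha> + real p)) ^ k)
      \<longlonglongrightarrow> 1 / fact k * (\<Prod>i<k. \<alpha>) * exp (- \<alpha>) / 1"
    by (intro tendsto_intros power_p power_k) (auto intro: factor)
  moreover have "eventually (\<lambda>p. 1 / fact k * (\<Prod>i<k. (real p - real i) * (\<alpha> / (\<alpha> + real p)))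
        * (1 - \<alpha> / (\<alpha> + real p)) ^ p / (1 - \<alpha> / (\<alpha> + real p)) ^ k
      = pmf (binomial_pmf p (\<alpha> / (\<alpha> + real p))) k) sequentially"
    using eventually_gt_at_top[of k]
    by eventually_elim (rule pmf_binomial_eq_prod[symmetric]; use \<alpha> in \<open>auto simp: field_simps\<close>)
  ultimately have "(\<lambda>p. pmf (binomial_pmf p (\<alpha> / (\<alpha> + real p))) k)
      \<longlonglongrightarrow> 1 / fact k * (\<Prod>i<k. \<alpha>) * exp (- \<alpha>) / 1"
    by (rule Lim_transform_eventually)
  with \<alpha> show ?thesis
    by simp
qed

theorem theorem1:
  fixes \<alpha> :: real and n :: nat
    and M :: "nat \<Rightarrow> 'a measure"
    and S :: "nat \<Rightarrow> nat \<Rightarrow> nat \<Rightarrow> real"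
    and \<beta> :: "nat \<Rightarrow> nat \<Rightarrow> 'a \<Rightarrow> real"
    and \<epsilon> :: "nat \<Rightarrow> nat \<Rightarrow> nat \<Rightarrow> 'a \<Rightarrow> real"
  assumes "\<alpha> > 0"
    and "\<forall>p. mvp_ibp (M p) p \<alpha> n (S p) (\<beta> p) (\<epsilon> p)"
  shows "(\<forall>i<n. (\<lambda>p. integral\<^sup>L (M p) (num_features p (\<beta> p) (\<epsilon> p) i)) \<longlonglongrightarrow> \<alpha>) \<and>
         ((\<forall>p. \<forall>j<p. \<forall>k<p. S p j k = (if j = k then 1 else 0)) \<longrightarrow>
          (\<forall>i<n. weak_conv_m (\<lambda>p. distr (M p) borel (num_features p (\<beta> p) (\<epsilon> p) i))
                               (distr (measure_pmf (poisson_pmf \<alpha>)) borel real)))"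
proof (intro conjI allI impI)
  fix i
  assume "i < n"
  then have object: "mvp_ibp_object (M p) p \<alpha> n (S p) (\<beta> p) (\<epsilon> p) i" for p
    using assms(2) by (simp add: mvp_ibp_object_def)
  have "(\<lambda>p. real p * \<alpha> / (\<alpha> + real p)) \<longlonglongrightarrow> \<alpha>"
    using assms(1) by real_asymp
  then show "(\<lambda>p. integral\<^sup>L (M p) (num_features p (\<beta> p) (\<epsilon> p) i)) \<longlonglongrightarrow> \<alpha>"
    by (simp add: mvp_ibp_object.integral_num_features[OF object assms(1)])
next
  fix i
  assume identity: "\<forall>p. \<forall>j<p. \<forall>k<p. S p j k = (if j = k then 1 else 0)" and "i < n"
  then have object: "mvp_ibp_object (M p) p \<alpha> n (S p) (\<beta> p) (\<epsilon> p) i" for p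
    using assms(2) by (simp add: mvp_ibp_object_def)
  define q where "q p = measure (latent_law \<alpha> p) {0<..}" for p
  have "(\<lambda>p. pmf (binomial_pmf p (q p)) k) \<longlonglongrightarrow> pmf (poisson_pmf \<alpha>) k" for k
  proof (rule Lim_transform_eventually[OF pmf_binomial_tendsto_poisson[OF assms(1)]])
    show "eventually (\<lambda>p. pmf (binomial_pmf p (\<alpha> / (\<alpha> + real p))) k = pmf (binomial_pmf p (q p)) k) sequentially"
      using eventually_gt_at_top[of 0]
      by eventually_elim (simp add: q_def measure_latent_law_pos assms(1))
  qed
  then have "weak_conv_m (\<lambda>p. distr (measure_pmf (binomial_pmf p (q p))) borel real)
      (distr (measure_pmf (poisson_pmf \<alpha>)) borel real)"
    by (rule weak_conv_m_distr_real_pmf)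
  moreover have "distr (M p) borel (num_features p (\<beta> p) (\<epsilon> p) i)
      = distr (measure_pmf (binomial_pmf p (q p))) borel real" for p
    unfolding q_def using identity by (intro mvp_ibp_object.distr_num_features_eq_binomial[OF object]) simp
  ultimately show "weak_conv_m (\<lambda>p. distr (M p) borel (num_features p (\<beta> p) (\<epsilon> p) i))
      (distr (measure_pmf (poisson_pmf \<alpha>)) borel real)"
    by simp
qed

end
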